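(* Let $*$ be an order-preserving left action of a monoid $T$ on a poset $X$, and let $Y\subseteq X$ be an order ideal of $X$ which is a meet semilattice under the induced order. Let $\cdot$ be the induced left partial action of $T$ on $Y$ ($t\cdot y$ is defined iff $t*y\in Y$, and then $t\cdot y=t*y$), and assume it satisfies axioms (A), (B), (C); let $\circ$ be its reverse right partial action. Assume moreover that for all $t\in T$, $x\in X$, $y\in Y$: if $x\le t*y$ then $x=t*z$ for some $z\le y$. Then for any $x,y\in Y$ and $s\in T$ such that $x\circ s$ is defined, the meet $x\wedge s*y$ exists in $X$ and $x\wedge s*y=s\cdot((x\circ s)\wedge y)$.
   Context: A left partial action of $T$ on $Y$: $1\cdot y=y$ always defined; if $t\cdot y$ and $s\cdot(t\cdot y)$ are defined then $(st)\cdot y$ is defined and equals it. With $\varphi_t\colon y\mapsto t\cdot y$: (A) $\mathrm{dom}\varphi_t$ and $\mathrm{ran}\varphi_t$ are order ideals of $Y$; (B) $\varphi_t$ is an order-isomorphism from $\mathrm{dom}\varphi_t$ onto $\mathrm{ran}\varphi_t$; (C) $\mathrm{dom}\varphi_t\ne\varnothing$. The reverse right partial action: $y\circ t$ is defined iff $y\in\mathrm{ran}\varphi_t$, and then $y\circ t=\varphi_t^{-1}(y)$. *)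

theory Defs
  imports Main
begin

definition order_ideal_in :: "'x::order set \<Rightarrow> 'x set \<Rightarrow> bool" where
  "order_ideal_in A I \<longleftrightarrow> I \<subseteq> A \<and> (\<forall>y\<in>I. \<forall>x\<in>A. x \<le> y \<longrightarrow> x \<in> I)"

definition is_inf_in :: "'x::order set \<Rightarrow> 'x \<Rightarrow> 'x \<Rightarrow> 'x \<Rightarrow> bool" where
  "is_inf_in A a b m \<longleftrightarrow> m \<in> A \<and> m \<le> a \<and> m \<le> b \<and>
     (\<forall>c\<in>A. c \<le> a \<and> c \<le> b \<longrightarrow> c \<le> m)"

definition meet_in :: "'x::order set \<Rightarrow> 'x \<Rightarrow> 'x \<Rightarrow> 'x" where
  "meet_in A a b = (THE m. is_inf_in A a b m)"

definition meet_semilattice_on :: "'x::order set \<Rightarrow> bool" where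
  "meet_semilattice_on A \<longleftrightarrow> (\<forall>a\<in>A. \<forall>b\<in>A. \<exists>m. is_inf_in A a b m)"

definition order_pres_action :: "('t::monoid_mult \<Rightarrow> 'x::order \<Rightarrow> 'x) \<Rightarrow> bool" where
  "order_pres_action act \<longleftrightarrow>
     (\<forall>x. act 1 x = x) \<and> (\<forall>s t x. act (s * t) x = act s (act t x)) \<and>
     (\<forall>t x x'. x \<le> x' \<longrightarrow> act t x \<le> act t x')"

text \<open>Induced partial action on Y: t . y defined iff t * y in Y.
  Domain and range of phi_t.\<close>
definition pdom :: "('t \<Rightarrow> 'x \<Rightarrow> 'x) \<Rightarrow> 'x set \<Rightarrow> 't \<Rightarrow> 'x set" where
  "pdom act Y t = {y \<in> Y. act t y \<in> Y}"

definition pran :: "('t \<Rightarrow> 'x \<Rightarrow> 'x) \<Rightarrow> 'x set \<Rightarrow> 't \<Rightarrow> 'x set" where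
  "pran act Y t = act t ` pdom act Y t"

text \<open>Reverse right partial action: y o t = phi_t^{-1}(y), for y in ran phi_t.\<close>
definition ract :: "('t \<Rightarrow> 'x \<Rightarrow> 'x) \<Rightarrow> 'x set \<Rightarrow> 'x \<Rightarrow> 't \<Rightarrow> 'x" where
  "ract act Y y t = (THE z. z \<in> pdom act Y t \<and> act t z = y)"

definition axioms_ABC :: "('t \<Rightarrow> 'x::order \<Rightarrow> 'x) \<Rightarrow> 'x set \<Rightarrow> bool" where
  "axioms_ABC act Y \<longleftrightarrow> (\<forall>t.
     order_ideal_in Y (pdom act Y t) \<and> order_ideal_in Y (pran act Y t) \<and>
     inj_on (act t) (pdom act Y t) \<and>
     (\<forall>y\<in>pdom act Y t. \<forall>y'\<in>pdom act Y t. y \<le> y' \<longleftrightarrow> act t y \<le> act t y') \<and>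
     pdom act Y t \<noteq> {})"

end

theory Submission
  imports Defs
begin

text \<open>Write \<open>x = s * u\<close> with \<open>u\<close> in the domain of \<open>\<phi>\<^sub>s\<close>, so \<open>x \<circ> s = u\<close>, and let \<open>m = u \<and> y\<close> in \<open>Y\<close>.
  Then \<open>s * m\<close> is a lower bound of \<open>x\<close> and \<open>s * y\<close> by monotonicity. Conversely, a lower bound \<open>c\<close>
  lifts twice, as \<open>c = s * z\<close> with \<open>z \<le> u\<close> and as \<open>c = s * w\<close> with \<open>w \<le> y\<close>; both \<open>z\<close> and \<open>w\<close> lie
  in the domain of \<open>\<phi>\<^sub>s\<close>, so injectivity of \<open>\<phi>\<^sub>s\<close> gives \<open>z = w \<le> m\<close>, whence \<open>c \<le> s * m\<close>.\<close>

lemma is_inf_in_unique: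
  assumes "is_inf_in A a b m" and "is_inf_in A a b m'"
  shows "m' = m"
  using assms unfolding is_inf_in_def by (meson order.antisym)

lemma meet_in_eqI:
  assumes "is_inf_in A a b m"
  shows "meet_in A a b = m"
  unfolding meet_in_def using assms is_inf_in_unique by blast

lemma is_inf_in_meet_in:
  assumes "meet_semilattice_on A" and "a \<in> A" and "b \<in> A"
  shows "is_inf_in A a b (meet_in A a b)"
  using assms meet_in_eqI unfolding meet_semilattice_on_def by metis

lemma ract_act:
  assumes "inj_on (act t) (pdom act Y t)" and "u \<in> pdom act Y t"
  shows "ract act Y (act t u) t = u"
  unfolding ract_def using assms by (auto intro!: the_equality dest: inj_onD)

lemma act_preserves_inf:
  fixes act :: "'t \<Rightarrow> 'x::order \<Rightarrow> 'x"
  assumes mono: "mono (act s)"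
    and Y_ideal: "order_ideal_in UNIV Y"
    and dom_ideal: "order_ideal_in Y (pdom act Y s)"
    and inj: "inj_on (act s) (pdom act Y s)"
    and lift: "\<And>c v. v \<in> Y \<Longrightarrow> c \<le> act s v \<Longrightarrow> \<exists>z. z \<le> v \<and> c = act s z"
    and u: "u \<in> pdom act Y s" and y: "y \<in> Y"
    and m: "is_inf_in Y u y m"
  shows "act s m \<in> Y" and "is_inf_in UNIV (act s u) (act s y) (act s m)"
proof -
  have down_Y: "a \<in> Y" if "a \<le> b" "b \<in> Y" for a b
    using Y_ideal that unfolding order_ideal_in_def by blast
  have down_dom: "a \<in> pdom act Y s" if "a \<le> b" "b \<in> pdom act Y s" "a \<in> Y" for a b
    using dom_ideal that unfolding order_ideal_in_def by blast
  have uY: "u \<in> Y" and suY: "act s u \<in> Y" using u unfolding pdom_def by auto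
  from m have "m \<in> Y" and "m \<le> u" and "m \<le> y" unfolding is_inf_in_def by auto
  then have "m \<in> pdom act Y s" using down_dom u by blast
  then show "act s m \<in> Y" unfolding pdom_def by blast
  have greatest: "c \<le> act s m" if c_u: "c \<le> act s u" and c_y: "c \<le> act s y" for c
  proof -
    obtain z where "z \<le> u" and cz: "c = act s z" using lift[OF uY c_u] by blast
    then have z_dom: "z \<in> pdom act Y s" using down_Y down_dom uY u by blast
    obtain w where "w \<le> y" and cw: "c = act s w" using lift[OF y c_y] by blast
    have "c \<in> Y" using c_u suY down_Y by blast
    then have "w \<in> pdom act Y s" using \<open>w \<le> y\<close> y cw down_Y unfolding pdom_def by auto
    with z_dom cz cw inj have "w = z" by (auto dest: inj_onD)
    with \<open>z \<le> u\<close> \<open>w \<le> y\<close> have "z \<le> m"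
      using m z_dom unfolding is_inf_in_def pdom_def by blast
    then show ?thesis using cz mono by (simp add: monoD)
  qed
  show "is_inf_in UNIV (act s u) (act s y) (act s m)"
    unfolding is_inf_in_def
    using mono \<open>m \<le> u\<close> \<open>m \<le> y\<close> greatest by (auto dest: monoD)
qed

theorem lemma3p8:
  fixes act :: "'t::monoid_mult \<Rightarrow> 'x::order \<Rightarrow> 'x" and Y :: "'x set"
  assumes "order_pres_action act"
    and "order_ideal_in UNIV Y"
    and "meet_semilattice_on Y"
    and "axioms_ABC act Y"
    and "\<forall>t x y. y \<in> Y \<and> x \<le> act t y \<longrightarrow> (\<exists>z. z \<le> y \<and> x = act t z)"
    and "x \<in> Y" and "y \<in> Y"
    and "x \<in> pran act Y s"
  shows "act s (meet_in Y (ract act Y x s) y) \<in> Y \<and>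
         is_inf_in UNIV x (act s y) (act s (meet_in Y (ract act Y x s) y))"
proof -
  have mono: "mono (act s)"
    using assms(1) unfolding order_pres_action_def by (auto intro: monoI)
  have dom_ideal: "order_ideal_in Y (pdom act Y s)" and inj: "inj_on (act s) (pdom act Y s)"
    using assms(4) unfolding axioms_ABC_def by auto
  obtain u where u: "u \<in> pdom act Y s" and x: "x = act s u"
    using assms(8) unfolding pran_def by blast
  have "u \<in> Y" using u unfolding pdom_def by blast
  then have m: "is_inf_in Y u y (meet_in Y u y)"
    using is_inf_in_meet_in assms(3,7) by blast
  have lift: "\<And>c v. v \<in> Y \<Longrightarrow> c \<le> act s v \<Longrightarrow> \<exists>z. z \<le> v \<and> c = act s z"
    using assms(5) by blast
  have "ract act Y x s = u" using ract_act[OF inj u] x by simp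
  then show ?thesis
    using act_preserves_inf[OF mono assms(2) dom_ideal inj lift u assms(7) m] x by simp
qed

end
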